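(* Let $\ell$ be a generic length vector of length $n\ge4$, $m=n-3$, and suppose $R^m\neq0$ in $H^m(\overline{M}(\ell))$. If $m$ is a power of $2$, then $\overline{R}^{\,2m-1}\neq0$ in $H^{2m-1}(\overline{M}(\ell)\times\overline{M}(\ell))$. If $m$ is not a power of $2$ and $\ell$ has a nonempty gee, then there exist positive integers $t$ and $A$ and distinct $i_1,\ldots,i_{t+1}\in[\![n-1]\!]$ such that $$\overline{V_{i_1}}\cdots\overline{V_{i_t}}\,\overline{V_{i_{t+1}}}^{\,A}\,\overline{R}^{\,2m-A-t-1}\neq0\in H^{2m-1}(\overline{M}(\ell)\times\overline{M}(\ell)).$$ Hence in either case $\mathrm{TC}(\overline{M}(\ell))\ge 2m=2n-6$.
   Context: A generic length vector $\ell=(\ell_1,\ldots,\ell_n)$: positive reals, $\ell_1\le\cdots\le\ell_n<\ell_1+\cdots+\ell_{n-1}$, with no $S\subset[\![n]\!]=\{1,\ldots,n\}$ having $\sum_{i\in S}\ell_i=\sum_{i\notin S}\ell_i$. $\overline{M}(\ell)=\{(z_1,\ldots,z_n)\in(S^1)^n:\sum\ell_iz_i=0\}/O(2)$, a closed connected $m$-manifold, $m=n-3$. $S\subset[\![n]\!]$ is short if $\sum_{i\in S}\ell_i<\sum_{i\notin S}\ell_i$; a subgee is a set $S\subset[\![n-1]\!]$ with $S\cup\{n\}$ short; gees are the maximal subgees (equivalently, the maximal short sets containing $n$, with $n$ removed). All cohomology has $\mathbb{Z}_2$ coefficients. By Hausmann–Knudsen, $H^*(\overline{M}(\ell))$ is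 generated by $R,V_1,\ldots,V_{n-1}\in H^1$ subject only to: (i) all monomials of the same degree divisible by exactly the same set of $V_i$'s are equal; writing $V_S=\prod_{i\in S}V_i$, the classes $R^{d-|S|}V_S$ span $H^d$; (ii) $V_S=0$ unless $S$ is a subgee; (iii) for each subgee $S$ with $|S|\ge n-2-d$, $\sum_{T}R^{d-|T|}V_T=0$ in $H^d$, summed over $T\subset[\![n-1]\!]$, $|T|\le d$, $T\cap S=\emptyset$. For $z\in H^1$, $\overline{z}=z\otimes1+1\otimes z$. $\mathrm{TC}$ is Farber's non-reduced topological complexity (contractible spaces have $\mathrm{TC}=1$). *)

theory Defs
  imports Complex_Main
begin

definition generic_length_vector :: "nat \<Rightarrow> (nat \<Rightarrow> real) \<Rightarrow> bool" where
  "generic_length_vector n l \<longleftrightarrow>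
     (\<forall>i\<in>{1..n}. 0 < l i) \<and>
     (\<forall>i j. 1 \<le> i \<longrightarrow> i \<le> j \<longrightarrow> j \<le> n \<longrightarrow> l i \<le> l j) \<and>
     l n < (\<Sum>i\<in>{1..n-1}. l i) \<and>
     (\<forall>S. S \<subseteq> {1..n} \<longrightarrow> (\<Sum>i\<in>S. l i) \<noteq> (\<Sum>i\<in>{1..n} - S. l i))"

definition short_set :: "nat \<Rightarrow> (nat \<Rightarrow> real) \<Rightarrow> nat set \<Rightarrow> bool" where
  "short_set n l S \<longleftrightarrow> S \<subseteq> {1..n} \<and> (\<Sum>i\<in>S. l i) < (\<Sum>i\<in>{1..n} - S. l i)"

definition subgee :: "nat \<Rightarrow> (nat \<Rightarrow> real) \<Rightarrow> nat set \<Rightarrow> bool" where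
  "subgee n l S \<longleftrightarrow> S \<subseteq> {1..n-1} \<and> short_set n l (insert n S)"

definition gee :: "nat \<Rightarrow> (nat \<Rightarrow> real) \<Rightarrow> nat set \<Rightarrow> bool" where
  "gee n l S \<longleftrightarrow> subgee n l S \<and> (\<forall>T. subgee n l T \<longrightarrow> S \<subseteq> T \<longrightarrow> T = S)"

section \<open>Z2-vector spaces as finite sets (symmetric difference = addition)\<close>

inductive_set zspan :: "'a set set \<Rightarrow> 'a set set" for G :: "'a set set" where
  zspan_zero: "{} \<in> zspan G"
| zspan_add: "g \<in> G \<Longrightarrow> v \<in> zspan G \<Longrightarrow> (g - v) \<union> (v - g) \<in> zspan G"

section \<open>The Hausmann--Knudsen presentation of H^*(Mbar(l); Z2)\<close>

text \<open>A monomial basis element (d,S) of the free space in degree d stands for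
  R^(d-|S|) V_S, with S a subset of {1..n-1} and |S| <= d.  By relation (i) every
  monomial of degree d in R, V_1, ..., V_(n-1) divisible by exactly the V_i with i in S
  equals this one.  A class is an element of the free Z2-space, i.e. a finite set of
  such basis elements.\<close>

definition HK_basis :: "nat \<Rightarrow> (nat \<times> nat set) set" where
  "HK_basis n = {(d, S). S \<subseteq> {1..n-1} \<and> card S \<le> d}"

text \<open>Relations (ii) and (iii), in every degree d.\<close>
definition HK_relations :: "nat \<Rightarrow> (nat \<Rightarrow> real) \<Rightarrow> (nat \<times> nat set) set set" where
  "HK_relations n l =
     {{(d, S)} | d S. (d, S) \<in> HK_basis n \<and> \<not> subgee n l S} \<union>
     {{(d, T) | T. (d, T) \<in> HK_basis n \<and> T \<inter> S = {}} | d S.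
         subgee n l S \<and> n \<le> card S + d + 2}"

definition HK_zero :: "nat \<Rightarrow> (nat \<Rightarrow> real) \<Rightarrow> (nat \<times> nat set) set \<Rightarrow> bool" where
  "HK_zero n l x \<longleftrightarrow> x \<in> zspan (HK_relations n l)"

section \<open>H^*(Mbar) \<otimes> H^*(Mbar) = H^*(Mbar \<times> Mbar) (Kuenneth)\<close>

text \<open>An element of the free tensor product is a finite set of pairs of basis elements;
  it is zero in H \<otimes> H iff it lies in Rel \<otimes> F + F \<otimes> Rel.\<close>
definition tensor_relations :: "nat \<Rightarrow> (nat \<Rightarrow> real) \<Rightarrow>
    ((nat \<times> nat set) \<times> (nat \<times> nat set)) set set" where
  "tensor_relations n l =
     {r \<times> {b} | r b. r \<in> HK_relations n l \<and> b \<in> HK_basis n} \<union>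
     {{b} \<times> r | r b. r \<in> HK_relations n l \<and> b \<in> HK_basis n}"

definition tensor_zero :: "nat \<Rightarrow> (nat \<Rightarrow> real) \<Rightarrow>
    ((nat \<times> nat set) \<times> (nat \<times> nat set)) set \<Rightarrow> bool" where
  "tensor_zero n l x \<longleftrightarrow> x \<in> zspan (tensor_relations n l)"

text \<open>Generators: None = R, Some i = V_i.  A word w denotes the product of the
  barred generators  zbar = z \<otimes> 1 + 1 \<otimes> z.  Expanding, the product equals the sum over
  J \<subseteq> positions of (prod_{j in J} w_j) \<otimes> (prod_{j notin J} w_j).\<close>

definition vidx :: "nat option list \<Rightarrow> nat set \<Rightarrow> nat set" where
  "vidx w J = {i. \<exists>j\<in>J. j < length w \<and> w ! j = Some i}"

definition split_mon :: "nat option list \<Rightarrow> nat set \<Rightarrow> (nat \<times> nat set) \<times> (nat \<times> nat set)" where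
  "split_mon w J = ((card J, vidx w J), (length w - card J, vidx w ({..<length w} - J)))"

definition barprod :: "nat option list \<Rightarrow> ((nat \<times> nat set) \<times> (nat \<times> nat set)) set" where
  "barprod w = {x. odd (card {J. J \<subseteq> {..<length w} \<and> split_mon w J = x})}"

end

(* A set F of basis monomials represents the functional x \<mapsto> card (x \<inter> F) mod 2.  Let
   phi_d send R^(d-|S|) V_S to the parity of the number of subgees containing S.  Double counting
   subgees shows that phi_d kills all Hausmann-Knudsen relations for d \<le> m = n - 3, so
   phi_m \<otimes> phi_(m-1) is a functional on H^m \<otimes> H^(m-1) \<subseteq> H^(2m-1)(Mbar \<times> Mbar).  On a product of
   barred generators it counts, mod 2, the ways of sending m of the letters to the first factor
   such that both halves have value 1; if this count is odd, the product is nonzero.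

   If R^m \<noteq> 0, the number of subgees is odd (otherwise R^m is a sum of relations), so phi takes
   the value 1 on every power of R, and for the bar of R^(2m-1) the count is (2m-1 choose m),
   which is odd when m is a power of 2.

   If there is a nonempty gee G, then S \<mapsto> phi(V_S) is not the indicator of the subsets of one
   set Z \<subseteq> [n-1].  A minimal Q \<subseteq> [n-1] on which it fails has 2 \<le> |Q| \<le> m, and on the subsets of
   Q it is such an indicator except at Q itself.  Writing Q = {x_1, ..., x_t, b}, the word
   V_x1 ... V_xt V_b^A R^(2m-1-t-A) has an odd count for A = m - t if b \<notin> Z, and otherwise,
   by an inclusion-exclusion count, for A = m or for its neighbour A = m + 1 or A = m - 1. *)

theory Submission
  imports Defs
begin

section \<open>Z/2-linear algebra on finite sets\<close>

lemma card_sym_diff: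
  assumes "finite A" "finite B"
  shows "card (sym_diff A B) + 2 * card (A \<inter> B) = card A + card B"
proof -
  have "card (sym_diff A B) = card ((A \<union> B) - (A \<inter> B))"
    by (rule arg_cong[where f = card]) blast
  also have "\<dots> = card (A \<union> B) - card (A \<inter> B)"
    using assms by (intro card_Diff_subset) auto
  moreover have "card (A \<inter> B) \<le> card (A \<union> B)"
    using assms by (intro card_mono) auto
  ultimately show ?thesis
    using card_Un_Int[OF assms] by linarith
qed

lemma zspan_even_Int:
  assumes "\<And>g. g \<in> G \<Longrightarrow> finite g \<and> even (card (g \<inter> F))" and "v \<in> zspan G"
  shows "finite v \<and> even (card (v \<inter> F))"
  using assms(2)
proof (induction rule: zspan.induct)
  case (zspan_add g v)
  have g: "finite g" "even (card (g \<inter> F))"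
    using assms(1) zspan_add.hyps(1) by auto
  have "card (sym_diff (g \<inter> F) (v \<inter> F)) + 2 * card (g \<inter> F \<inter> (v \<inter> F))
      = card (g \<inter> F) + card (v \<inter> F)"
    using g zspan_add.IH by (intro card_sym_diff) auto
  moreover have "even (card (g \<inter> F) + card (v \<inter> F))"
    using g zspan_add.IH by simp
  ultimately have "even (card (sym_diff (g \<inter> F) (v \<inter> F)))"
    by (metis even_add even_mult_iff even_numeral)
  moreover have "sym_diff g v \<inter> F = sym_diff (g \<inter> F) (v \<inter> F)" by blast
  ultimately show ?case
    using g zspan_add.IH by simp
qed simp

lemma zspan_generator: "g \<in> G \<Longrightarrow> g \<in> zspan G"
  using zspan_add[OF _ zspan_zero] by fastforce

lemma zspan_sym_diff:
  assumes "u \<in> zspan G" "v \<in> zspan G"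
  shows "sym_diff u v \<in> zspan G"
  using assms(1)
proof (induction rule: zspan.induct)
  case (zspan_add g w)
  have "sym_diff (sym_diff g w) v = sym_diff g (sym_diff w v)" by blast
  then show ?case using zspan.zspan_add[OF zspan_add.hyps(1) zspan_add.IH] by simp
qed (simp add: assms(2))

lemma finite_zspan_of_singletons:
  assumes "finite X" "\<And>x. x \<in> X \<Longrightarrow> {x} \<in> G"
  shows "X \<in> zspan G"
  using assms
proof (induction X rule: finite_induct)
  case (insert x X)
  then have "sym_diff {x} X \<in> zspan G" by (intro zspan_add) auto
  moreover have "sym_diff {x} X = insert x X" using insert.hyps by blast
  ultimately show ?case by simp
qed (simp add: zspan_zero)

lemma zspan_if_sym_diff_singletons:
  assumes "x \<in> zspan G" "finite (sym_diff x y)" "\<And>p. p \<in> sym_diff x y \<Longrightarrow> {p} \<in> G"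
  shows "y \<in> zspan G"
proof -
  have "sym_diff x y \<in> zspan G"
    using assms(2,3) by (rule finite_zspan_of_singletons)
  then have "sym_diff x (sym_diff x y) \<in> zspan G"
    using assms(1) by (rule zspan_sym_diff[rotated])
  moreover have "sym_diff x (sym_diff x y) = y" by blast
  ultimately show ?thesis by simp
qed

definition zsum :: "('i \<Rightarrow> 'a set) \<Rightarrow> 'i set \<Rightarrow> 'a set" where
  "zsum g I = {p. odd (card {i\<in>I. p \<in> g i})}"

lemma zsum_in_zspan:
  assumes "finite I" "\<And>i. i \<in> I \<Longrightarrow> g i \<in> zspan G"
  shows "zsum g I \<in> zspan G"
  using assms
proof (induction I rule: finite_induct)
  case empty
  then show ?case by (simp add: zsum_def zspan_zero)
next
  case (insert i I)
  have "zsum g (insert i I) = sym_diff (g i) (zsum g I)"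
  proof (rule set_eqI)
    fix p
    have "{j\<in>insert i I. p \<in> g j} = (if p \<in> g i then insert i {j\<in>I. p \<in> g j} else {j\<in>I. p \<in> g j})"
      by auto
    then show "p \<in> zsum g (insert i I) \<longleftrightarrow> p \<in> sym_diff (g i) (zsum g I)"
      using insert.hyps by (simp add: zsum_def)
  qed
  then show ?case using insert by (simp add: zspan_sym_diff)
qed

lemma even_card_odd_fibres_Int:
  assumes "finite D"
  shows "even (card ({x. odd (card {d\<in>D. h d = x})} \<inter> F)) \<longleftrightarrow> even (card {d\<in>D. h d \<in> F})"
proof -
  let ?X = "h ` D \<inter> F"
  have "card {d\<in>D. h d \<in> F} = card (\<Union>x\<in>?X. {d\<in>D. h d = x})"
    by (rule arg_cong[where f=card]) auto
  also have "\<dots> = (\<Sum>x\<in>?X. card {d\<in>D. h d = x})"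
    using assms by (intro card_UN_disjoint) auto
  finally have "even (card {d\<in>D. h d \<in> F}) \<longleftrightarrow> even (card {x\<in>?X. odd (card {d\<in>D. h d = x})})"
    using assms by (simp add: even_sum_iff)
  moreover have "{x\<in>?X. odd (card {d\<in>D. h d = x})} = {x. odd (card {d\<in>D. h d = x})} \<inter> F"
  proof (intro set_eqI iffI)
    fix x assume x: "x \<in> {x. odd (card {d\<in>D. h d = x})} \<inter> F"
    then have "{d\<in>D. h d = x} \<noteq> {}" by (intro odd_card_imp_not_empty) simp
    with x show "x \<in> {x\<in>?X. odd (card {d\<in>D. h d = x})}" by blast
  qed simp
  ultimately show ?thesis by simp
qed

section \<open>Binomial coefficients mod 2\<close>

lemma even_choose_two_power:
  assumes "0 < j" "j < 2 ^ k"
  shows "even (2 ^ k choose j)"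
proof (rule ccontr)
  assume "odd (2 ^ k choose j)"
  then have "coprime (2 ^ k) (2 ^ k choose j :: nat)"
    by simp
  moreover have "j * (2 ^ k choose j) = 2 ^ k * ((2 ^ k - 1) choose (j - 1))"
    using assms(1) by (rule times_binomial_minus1_eq)
  ultimately have "2 ^ k dvd j"
    by (metis coprime_dvd_mult_left_iff dvd_triv_left)
  then have "2 ^ k \<le> j" using assms(1) by (rule dvd_imp_le)
  then show False using assms(2) by simp
qed

lemma odd_choose_two_power_minus_one:
  "j < 2 ^ k \<Longrightarrow> odd ((2 ^ k - 1) choose j)"
proof (induction j)
  case (Suc j)
  have "2 ^ k choose Suc j = ((2 ^ k - 1) choose j) + ((2 ^ k - 1) choose Suc j)"
    using binomial_Suc_Suc[of "2 ^ k - 1" j] by simp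
  then show ?case
    using Suc even_choose_two_power[of "Suc j" k] by simp
qed simp

lemma generic_length_vector_nonneg:
  "generic_length_vector n l \<Longrightarrow> i \<in> {1..n} \<Longrightarrow> 0 \<le> l i"
  unfolding generic_length_vector_def by (meson less_imp_le)

lemma generic_length_vector_le_last:
  "generic_length_vector n l \<Longrightarrow> i \<in> {1..n} \<Longrightarrow> l i \<le> l n"
  unfolding generic_length_vector_def by auto

lemma generic_length_vector_ge_3:
  assumes "generic_length_vector n l"
  shows "3 \<le> n"
proof (rule ccontr)
  assume "\<not> 3 \<le> n"
  then consider "n = 0" | "n = 1" | "n = 2" by linarith
  then show False
  proof cases
    case 3
    then have "l 1 \<le> l 2" "l 2 < l 1"
      using assms generic_length_vector_le_last[OF assms, of 1]
      by (auto simp: generic_length_vector_def)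
    then show False by simp
  qed (use assms in \<open>auto simp: generic_length_vector_def\<close>)
qed

lemma subgee_iff:
  assumes "generic_length_vector n l"
  shows "subgee n l S \<longleftrightarrow> S \<subseteq> {1..n-1} \<and> l n + sum l S < sum l ({1..n-1} - S)"
proof (cases "S \<subseteq> {1..n-1}")
  case True
  have "0 < n" using generic_length_vector_ge_3[OF assms] by simp
  then have "insert n S \<subseteq> {1..n}" "{1..n} - insert n S = {1..n-1} - S" "n \<notin> S"
    using True by (auto simp: subset_iff)
  moreover have "finite S" using True finite_subset by blast
  ultimately show ?thesis
    using True by (simp add: subgee_def short_set_def)
qed (simp add: subgee_def)

lemma subgee_subset: "subgee n l S \<Longrightarrow> S \<subseteq> {1..n-1}"
  by (simp add: subgee_def)

lemma finite_subgee: "subgee n l S \<Longrightarrow> finite S"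
  using finite_subset[OF subgee_subset] by blast

lemma finite_subgees: "finite {U. subgee n l U \<and> P U}"
proof -
  have "{U. subgee n l U \<and> P U} \<subseteq> Pow {1..n-1}"
    using subgee_subset by blast
  then show ?thesis by (rule finite_subset) simp
qed

lemma subgee_empty: "generic_length_vector n l \<Longrightarrow> subgee n l {}"
  by (simp add: subgee_iff) (simp add: generic_length_vector_def)

lemma subgee_antimono:
  assumes gen: "generic_length_vector n l" and S: "subgee n l S" and "T \<subseteq> S"
  shows "subgee n l T"
proof -
  have S': "S \<subseteq> {1..n-1}" "l n + sum l S < sum l ({1..n-1} - S)"
    using S by (simp_all add: subgee_iff[OF gen])
  have nonneg: "0 \<le> l i" if "i \<in> {1..n-1}" for i
    using generic_length_vector_nonneg[OF gen] that by auto
  have "sum l T \<le> sum l S"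
    using S' \<open>T \<subseteq> S\<close> nonneg by (intro sum_mono2) (auto intro: finite_subset)
  moreover have "sum l ({1..n-1} - S) \<le> sum l ({1..n-1} - T)"
    using \<open>T \<subseteq> S\<close> nonneg by (intro sum_mono2) auto
  ultimately show ?thesis
    using S' \<open>T \<subseteq> S\<close> by (simp add: subgee_iff[OF gen])
qed

text \<open>Adding the defining inequalities of S and T shows that the sides outside S \<union> T are
  together longer than l n, the longest side; so there are at least two of them.\<close>
lemma two_le_card_outside_subgees:
  assumes gen: "generic_length_vector n l" and S: "subgee n l S" and T: "subgee n l T"
  shows "2 \<le> card ({1..n-1} - (S \<union> T))"
proof (rule ccontr)
  let ?C = "{1..n-1} - (S \<union> T)"
  assume "\<not> 2 \<le> card ?C"
  then have "card ?C \<le> 1" by simp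
  have S': "S \<subseteq> {1..n-1}" "l n + sum l S < sum l ({1..n-1} - S)"
    using S by (simp_all add: subgee_iff[OF gen])
  have T': "T \<subseteq> {1..n-1}" "l n + sum l T < sum l ({1..n-1} - T)"
    using T by (simp_all add: subgee_iff[OF gen])
  have nonneg: "0 \<le> l i" if "i \<in> {1..n-1}" for i
    using generic_length_vector_nonneg[OF gen] that by auto
  have fin: "finite S" "finite T"
    using S' T' finite_subset by blast+
  have "sum l ({1..n-1} - S) = sum l (T - S) + sum l ?C"
    using T' fin by (subst sum.union_disjoint[symmetric]) (auto intro!: sum.cong)
  moreover have "sum l ({1..n-1} - T) = sum l (S - T) + sum l ?C"
    using S' fin by (subst sum.union_disjoint[symmetric]) (auto intro!: sum.cong)
  moreover have "sum l (S - T) \<le> sum l S" "sum l (T - S) \<le> sum l T"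
    using S' T' fin nonneg by (auto intro!: sum_mono2)
  ultimately have "l n < sum l ?C"
    using S'(2) T'(2) by linarith
  moreover have "sum l ?C \<le> l n"
  proof (cases "?C = {}")
    case True
    have "sum l ?C = 0" by (simp only: True sum.empty)
    then show ?thesis
      using generic_length_vector_nonneg[OF gen, of n] generic_length_vector_ge_3[OF gen] by simp
  next
    case False
    then have "card ?C = 1"
      using \<open>card ?C \<le> 1\<close> by (simp add: le_Suc_eq)
    then obtain x where "?C = {x}"
      by (rule card_1_singletonE)
    moreover have "x \<in> ?C"
      using \<open>?C = {x}\<close> by simp
    then have "x \<in> {1..n}" by auto
    ultimately show ?thesis
      using generic_length_vector_le_last[OF gen] by simp
  qed
  ultimately show False by simp
qed

lemma card_subgee_le:
  assumes gen: "generic_length_vector n l" and S: "subgee n l S"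
  shows "card S \<le> n - 3"
proof -
  have "card ({1..n-1} - S) = (n - 1) - card S"
    using subgee_subset[OF S] by (simp add: card_Diff_subset finite_subset)
  then show ?thesis
    using two_le_card_outside_subgees[OF gen S S] by simp
qed

lemma card_Un_subgees_le:
  assumes gen: "generic_length_vector n l" and S: "subgee n l S" and T: "subgee n l T"
  shows "card (S \<union> T) \<le> n - 3"
proof -
  have "card ({1..n-1} - (S \<union> T)) = (n - 1) - card (S \<union> T)"
    using subgee_subset[OF S] subgee_subset[OF T] by (simp add: card_Diff_subset finite_subset)
  then show ?thesis
    using two_le_card_outside_subgees[OF gen S T] by simp
qed

definition subgees_above :: "nat \<Rightarrow> (nat \<Rightarrow> real) \<Rightarrow> nat set \<Rightarrow> nat" where
  "subgees_above n l S = card {U. subgee n l U \<and> S \<subseteq> U}"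

lemma subgee_if_odd_subgees_above:
  assumes gen: "generic_length_vector n l" and "odd (subgees_above n l S)"
  shows "subgee n l S"
proof -
  have "{U. subgee n l U \<and> S \<subseteq> U} \<noteq> {}"
    using assms(2) unfolding subgees_above_def by (intro odd_card_imp_not_empty)
  then show ?thesis
    using subgee_antimono[OF gen] by blast
qed

lemma subgees_above_gee: "gee n l G \<Longrightarrow> subgees_above n l G = 1"
proof -
  assume "gee n l G"
  then have "{U. subgee n l U \<and> G \<subseteq> U} = {G}"
    unfolding gee_def by blast
  then show ?thesis
    unfolding subgees_above_def by simp
qed

lemma sum_subgees_above:
  assumes "finite Y" and bound: "\<And>U. subgee n l U \<Longrightarrow> card (Y \<inter> U) \<le> k"
  shows "(\<Sum>T | T \<subseteq> Y \<and> card T \<le> k. subgees_above n l T)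
       = (\<Sum>U | subgee n l U. 2 ^ card (Y \<inter> U))"
proof -
  let ?TT = "{T. T \<subseteq> Y \<and> card T \<le> k}" and ?K = "{U. subgee n l U}"
  have fin: "finite ?TT" "finite ?K"
    using assms(1) finite_subgees[of n l "\<lambda>_. True"] by simp_all
  have "subgees_above n l T = (\<Sum>U\<in>?K. if T \<subseteq> U then 1 else 0)" for T
    using sum.inter_filter[OF fin(2), of "\<lambda>_. 1 :: nat" "\<lambda>U. T \<subseteq> U"]
    unfolding subgees_above_def by simp
  then have "(\<Sum>T\<in>?TT. subgees_above n l T) = (\<Sum>T\<in>?TT. \<Sum>U\<in>?K. if T \<subseteq> U then 1 else 0)"
    by simp
  also have "\<dots> = (\<Sum>U\<in>?K. \<Sum>T\<in>?TT. if T \<subseteq> U then 1 else 0)"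
    by (rule sum.swap)
  also have "\<dots> = (\<Sum>U\<in>?K. 2 ^ card (Y \<inter> U))"
  proof (rule sum.cong[OF refl])
    fix U assume "U \<in> ?K"
    then have "{T\<in>?TT. T \<subseteq> U} = Pow (Y \<inter> U)"
      using bound assms(1) by (auto intro: order_trans[OF card_mono])
    then have "card {T\<in>?TT. T \<subseteq> U} = 2 ^ card (Y \<inter> U)"
      using assms(1) by (metis card_Pow finite_Int)
    then show "(\<Sum>T\<in>?TT. if T \<subseteq> U then 1 else 0) = (2 :: nat) ^ card (Y \<inter> U)"
      using sum.inter_filter[OF fin(1), of "\<lambda>_. 1 :: nat" "\<lambda>T. T \<subseteq> U"] by simp
  qed
  finally show ?thesis by simp
qed

lemma even_card_odd_subgees_above:
  assumes gen: "generic_length_vector n l" and S: "subgee n l S"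
    and bound: "\<And>U. subgee n l U \<Longrightarrow> card (U - S) \<le> k"
  shows "even (card {T. T \<subseteq> {1..n-1} - S \<and> card T \<le> k \<and> odd (subgees_above n l T)})
     \<longleftrightarrow> S \<noteq> {}"
proof -
  let ?Y = "{1..n-1} - S"
  have YU: "?Y \<inter> U = U - S" if "subgee n l U" for U
    using subgee_subset[OF that] by blast
  let ?TT = "{T. T \<subseteq> ?Y \<and> card T \<le> k}"
  have "{T. T \<subseteq> ?Y \<and> card T \<le> k \<and> odd (subgees_above n l T)}
      = {T\<in>?TT. odd (subgees_above n l T)}" by blast
  then have "even (card {T. T \<subseteq> ?Y \<and> card T \<le> k \<and> odd (subgees_above n l T)})
      \<longleftrightarrow> even (\<Sum>T\<in>?TT. subgees_above n l T)"
    by (simp add: even_sum_iff)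
  also have "(\<Sum>T\<in>?TT. subgees_above n l T) = (\<Sum>U | subgee n l U. 2 ^ card (U - S))"
    using sum_subgees_above[of ?Y n l k] bound YU by simp
  also have "even (\<Sum>U | subgee n l U. 2 ^ card (U - S) :: nat)
      \<longleftrightarrow> even (card {U. subgee n l U \<and> card (U - S) = 0})"
    using finite_subgees[of n l "\<lambda>_. True"] by (simp add: even_sum_iff)
  also have "{U. subgee n l U \<and> card (U - S) = 0} = Pow S"
  proof (intro set_eqI iffI)
    fix U assume "U \<in> {U. subgee n l U \<and> card (U - S) = 0}"
    then show "U \<in> Pow S" using finite_subgee by auto
  next
    fix U assume "U \<in> Pow S"
    then show "U \<in> {U. subgee n l U \<and> card (U - S) = 0}"
      using subgee_antimono[OF gen S] by (simp add: Diff_eq_empty_iff[THEN iffD2])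
  qed
  finally show ?thesis
    using finite_subgee[OF S] by (simp add: card_Pow card_gt_0_iff)
qed

section \<open>The dual classes\<close>

text \<open>The functional phi_d of the header comment, as a set of basis monomials.\<close>
definition dual_class :: "nat \<Rightarrow> (nat \<Rightarrow> real) \<Rightarrow> nat \<Rightarrow> (nat \<times> nat set) set" where
  "dual_class n l d = {(d, S) | S. odd (subgees_above n l S)}"

lemma even_card_HK_relation_Int_dual:
  assumes gen: "generic_length_vector n l" and r: "r \<in> HK_relations n l" and "e \<le> n - 3"
  shows "finite r \<and> even (card (r \<inter> dual_class n l e))"
  using r unfolding HK_relations_def
proof (elim UnE CollectE exE conjE)
  fix d S assume "r = {(d, S)}" "\<not> subgee n l S"
  then have "r \<inter> dual_class n l e = {}"
    using subgee_if_odd_subgees_above[OF gen] by (auto simp: dual_class_def)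
  then show ?thesis using \<open>r = {(d, S)}\<close> by simp
next
  fix d S assume r_def: "r = {(d, T) | T. (d, T) \<in> HK_basis n \<and> T \<inter> S = {}}"
    and S: "subgee n l S" and big: "n \<le> card S + d + 2"
  have "r \<subseteq> Pair d ` Pow {1..n-1}"
    unfolding r_def HK_basis_def by blast
  then have "finite r" by (rule finite_subset) simp
  moreover have "even (card (r \<inter> dual_class n l e))"
  proof (cases "d = e")
    case False
    then have "r \<inter> dual_class n l e = {}"
      unfolding r_def dual_class_def by blast
    then show ?thesis by simp
  next
    case True
    let ?T = "{T. T \<subseteq> {1..n-1} - S \<and> card T \<le> d \<and> odd (subgees_above n l T)}"
    have "r \<inter> dual_class n l e = Pair d ` ?T"
      using True unfolding r_def dual_class_def HK_basis_def by blast
    then have "card (r \<inter> dual_class n l e) = card ?T"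
      by (simp add: card_image inj_on_def)
    moreover have "card (U - S) \<le> d" if U: "subgee n l U" for U
    proof -
      have "card (U - S) + card S = card (S \<union> U)"
        using finite_subgee[OF S] finite_subgee[OF U]
        by (subst card_Un_disjoint[symmetric]) (auto intro: arg_cong[where f = card])
      then show ?thesis
        using card_Un_subgees_le[OF gen S U] big by linarith
    qed
    moreover have "S \<noteq> {}"
      using big True \<open>e \<le> n - 3\<close> generic_length_vector_ge_3[OF gen] by auto
    ultimately show ?thesis
      using even_card_odd_subgees_above[OF gen S] by simp
  qed
  ultimately show ?thesis ..
qed

lemma even_card_tensor_relation_Int_Times:
  assumes F1: "\<And>r. r \<in> HK_relations n l \<Longrightarrow> finite r \<and> even (card (r \<inter> F1))"
    and F2: "\<And>r. r \<in> HK_relations n l \<Longrightarrow> finite r \<and> even (card (r \<inter> F2))"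
    and g: "g \<in> tensor_relations n l"
  shows "finite g \<and> even (card (g \<inter> F1 \<times> F2))"
  using g unfolding tensor_relations_def
proof (elim UnE CollectE exE conjE)
  fix r b assume "g = r \<times> {b}" "r \<in> HK_relations n l"
  moreover have "g \<inter> F1 \<times> F2 = (r \<inter> F1) \<times> ({b} \<inter> F2)"
    using \<open>g = r \<times> {b}\<close> by blast
  ultimately show ?thesis
    using F1 by (simp add: card_cartesian_product)
next
  fix r b assume "g = {b} \<times> r" "r \<in> HK_relations n l"
  moreover have "g \<inter> F1 \<times> F2 = ({b} \<inter> F1) \<times> (r \<inter> F2)"
    using \<open>g = {b} \<times> r\<close> by blast
  ultimately show ?thesis
    using F2 by (simp add: card_cartesian_product)
qed

definition dual_tensor :: "nat \<Rightarrow> (nat \<Rightarrow> real) \<Rightarrow> ((nat \<times> nat set) \<times> (nat \<times> nat set)) set" where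
  "dual_tensor n l = dual_class n l (n - 3) \<times> dual_class n l (n - 4)"

lemma even_card_Int_dual_tensor:
  assumes gen: "generic_length_vector n l" and "tensor_zero n l x"
  shows "even (card (x \<inter> dual_tensor n l))"
proof -
  have "finite g \<and> even (card (g \<inter> dual_tensor n l))" if "g \<in> tensor_relations n l" for g
    unfolding dual_tensor_def
    using even_card_HK_relation_Int_dual[OF gen, of _ "n - 3"]
      even_card_HK_relation_Int_dual[OF gen, of _ "n - 4"]
    by (intro even_card_tensor_relation_Int_Times[OF _ _ that]) auto
  then show ?thesis
    using assms(2) zspan_even_Int unfolding tensor_zero_def by blast
qed

section \<open>R^m \<noteq> 0 forces an odd number of subgees\<close>

lemma HK_relation_top_degree:
  assumes gen: "generic_length_vector n l" and "subgee n l S" "S \<noteq> {}"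
  shows "{(n - 3, T) | T. (n - 3, T) \<in> HK_basis n \<and> T \<inter> S = {}} \<in> HK_relations n l"
proof -
  have "card S \<noteq> 0"
    using assms(2,3) finite_subgee by auto
  then have "n \<le> card S + (n - 3) + 2"
    using generic_length_vector_ge_3[OF gen] by linarith
  then show ?thesis
    unfolding HK_relations_def using assms(2) by blast
qed

text \<open>The left-hand side is the coefficient of R^(n-3-|T|) V_T in the sum of the relations (iii)
  of degree n - 3 indexed by the sets S counted there.\<close>
lemma odd_card_disjoint_subgees_odd_above:
  assumes gen: "generic_length_vector n l" and even: "even (card {U. subgee n l U})"
    and T: "subgee n l T"
  shows "odd (card {S. subgee n l S \<and> S \<noteq> {} \<and> odd (subgees_above n l S) \<and> T \<inter> S = {}})
     \<longleftrightarrow> T = {}"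
proof -
  have "{S. subgee n l S \<and> S \<noteq> {} \<and> odd (subgees_above n l S) \<and> T \<inter> S = {}}
      = {S. S \<subseteq> {1..n-1} - T \<and> card S \<le> n - 3 \<and> odd (subgees_above n l S)}"
  proof (intro set_eqI iffI)
    fix S assume "S \<in> {S. subgee n l S \<and> S \<noteq> {} \<and> odd (subgees_above n l S) \<and> T \<inter> S = {}}"
    then show "S \<in> {S. S \<subseteq> {1..n-1} - T \<and> card S \<le> n - 3 \<and> odd (subgees_above n l S)}"
      using subgee_subset card_subgee_le[OF gen] by blast
  next
    fix S assume S: "S \<in> {S. S \<subseteq> {1..n-1} - T \<and> card S \<le> n - 3 \<and> odd (subgees_above n l S)}"
    have "S \<noteq> {}"
      using S even unfolding subgees_above_def by auto
    then show "S \<in> {S. subgee n l S \<and> S \<noteq> {} \<and> odd (subgees_above n l S) \<and> T \<inter> S = {}}"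
      using S subgee_if_odd_subgees_above[OF gen] by blast
  qed
  moreover have "card (U - T) \<le> n - 3" if "subgee n l U" for U
    using card_subgee_le[OF gen that] card_mono[OF finite_subgee[OF that], of "U - T"] by auto
  ultimately show ?thesis
    using even_card_odd_subgees_above[OF gen T] by auto
qed

text \<open>If the number of subgees were even, the sum X of the relations (iii) of degree m = n - 3
  over the nonempty subgees with an odd number of subgees above them would differ from R^m only
  by monomials V_T with T not a subgee, which vanish by (ii).\<close>
lemma odd_card_subgees:
  assumes gen: "generic_length_vector n l" and Rm: "\<not> HK_zero n l {(n - 3, {})}"
  shows "odd (card {U. subgee n l U})"
proof (rule ccontr)
  assume even: "\<not> odd (card {U. subgee n l U})"
  define m where "m = n - 3"
  define SS where "SS = {S. subgee n l S \<and> S \<noteq> {} \<and> odd (subgees_above n l S)}"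
  define rel where "rel S = {(m, T) | T. (m, T) \<in> HK_basis n \<and> T \<inter> S = {}}" for S
  define X where "X = zsum rel SS"
  have "X \<in> zspan (HK_relations n l)"
    unfolding X_def SS_def rel_def m_def
    by (intro zsum_in_zspan zspan_generator HK_relation_top_degree[OF gen] finite_subgees) auto
  have count: "odd (card {S\<in>SS. T \<inter> S = {}}) \<longleftrightarrow> T = {}" if "subgee n l T" for T
    using odd_card_disjoint_subgees_odd_above[OF gen _ that] even unfolding SS_def by simp
  have mem_X: "(d, T) \<in> X \<longleftrightarrow> d = m \<and> (m, T) \<in> HK_basis n \<and> odd (card {S\<in>SS. T \<inter> S = {}})"
    for d T
  proof -
    have eq: "{S\<in>SS. (d, T) \<in> rel S}
        = (if d = m \<and> (m, T) \<in> HK_basis n then {S\<in>SS. T \<inter> S = {}} else {})"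
      unfolding rel_def by auto
    show ?thesis
      unfolding X_def zsum_def mem_Collect_eq eq by auto
  qed
  have R: "(m, {}) \<in> X"
    using mem_X count[OF subgee_empty[OF gen]] by (simp add: HK_basis_def)
  define NS where "NS = {(m, T) | T. (m, T) \<in> HK_basis n \<and> \<not> subgee n l T}"
  have "sym_diff X {(m, {})} \<subseteq> NS"
  proof
    fix p assume p: "p \<in> sym_diff X {(m, {})}"
    obtain d T where "p = (d, T)" by fastforce
    with p R mem_X count show "p \<in> NS"
      unfolding NS_def by auto
  qed
  moreover have "finite NS"
    unfolding NS_def by (rule finite_subset[of _ "Pair m ` Pow {1..n-1}"]) (auto simp: HK_basis_def)
  moreover have "{p} \<in> HK_relations n l" if "p \<in> NS" for p
    using that unfolding NS_def HK_relations_def by blast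
  ultimately have "{(m, {})} \<in> zspan (HK_relations n l)"
    using zspan_if_sym_diff_singletons[OF \<open>X \<in> zspan (HK_relations n l)\<close>]
    by (meson finite_subset subsetD)
  then show False
    using Rm unfolding HK_zero_def m_def by simp
qed

section \<open>Bar products and the power of two case\<close>

text \<open>For P S = odd (subgees_above n l S) and m = n - 3 this is the value of dual_tensor on
  barprod w: J is the set of positions of the letters sent to the first tensor factor.\<close>
definition split_count :: "(nat set \<Rightarrow> bool) \<Rightarrow> nat option list \<Rightarrow> nat \<Rightarrow> nat" where
  "split_count P w m = card {J. J \<subseteq> {..<length w} \<and> card J = m
     \<and> P (vidx w J) \<and> P (vidx w ({..<length w} - J))}"

lemma not_tensor_zero_barprod_if_odd_split_count:
  assumes gen: "generic_length_vector n l" and len: "length w = 2 * (n - 3) - 1"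
    and odd: "odd (split_count (\<lambda>S. odd (subgees_above n l S)) w (n - 3))"
  shows "\<not> tensor_zero n l (barprod w)"
proof
  assume "tensor_zero n l (barprod w)"
  then have "even (card (barprod w \<inter> dual_tensor n l))"
    by (rule even_card_Int_dual_tensor[OF gen])
  moreover have "barprod w = {x. odd (card {J\<in>Pow {..<length w}. split_mon w J = x})}"
    unfolding barprod_def by simp
  ultimately have "even (card {J\<in>Pow {..<length w}. split_mon w J \<in> dual_tensor n l})"
    using even_card_odd_fibres_Int[of "Pow {..<length w}" "split_mon w" "dual_tensor n l"] by simp
  moreover have "{J\<in>Pow {..<length w}. split_mon w J \<in> dual_tensor n l}
      = {J. J \<subseteq> {..<length w} \<and> card J = n - 3
          \<and> odd (subgees_above n l (vidx w J))
          \<and> odd (subgees_above n l (vidx w ({..<length w} - J)))}"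
    using len by (auto simp: split_mon_def dual_tensor_def dual_class_def)
  ultimately show False
    using odd unfolding split_count_def by simp
qed

lemma not_tensor_zero_barprod_R:
  assumes gen: "generic_length_vector n l" and Rm: "\<not> HK_zero n l {(n - 3, {})}"
    and "n - 3 = 2 ^ k"
  shows "\<not> tensor_zero n l (barprod (replicate (2 * (n - 3) - 1) None))"
proof (rule not_tensor_zero_barprod_if_odd_split_count[OF gen])
  let ?w = "replicate (2 * (n - 3) - 1) None :: nat option list"
  have "vidx ?w J = {}" for J
    unfolding vidx_def by auto
  moreover have "odd (subgees_above n l {})"
    using odd_card_subgees[OF gen Rm] unfolding subgees_above_def by simp
  ultimately have "split_count (\<lambda>S. odd (subgees_above n l S)) ?w (n - 3)
      = card {J. J \<subseteq> {..<2 ^ Suc k - 1 :: nat} \<and> card J = 2 ^ k}"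
    unfolding split_count_def using \<open>n - 3 = 2 ^ k\<close> by simp
  also have "\<dots> = (2 ^ Suc k - 1) choose 2 ^ k"
    by (simp add: n_subsets)
  finally show "odd (split_count (\<lambda>S. odd (subgees_above n l S)) ?w (n - 3))"
    using odd_choose_two_power_minus_one[of "2 ^ k" "Suc k"] by simp
qed simp

definition principal_on :: "('a set \<Rightarrow> bool) \<Rightarrow> 'a set \<Rightarrow> bool" where
  "principal_on P Q \<longleftrightarrow> (\<exists>Z\<subseteq>Q. \<forall>S\<subseteq>Q. P S \<longleftrightarrow> S \<subseteq> Z)"

definition almost_principal_on :: "('a set \<Rightarrow> bool) \<Rightarrow> 'a set \<Rightarrow> 'a set \<Rightarrow> bool" where
  "almost_principal_on P Q Z \<longleftrightarrow> Z \<subseteq> Q \<and> (\<forall>S\<subseteq>Q. P S \<longleftrightarrow> (S = Q) \<noteq> (S \<subseteq> Z))"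

lemma exists_minimal_not_principal:
  assumes "finite U" "\<not> principal_on P U"
  shows "\<exists>Q\<subseteq>U. \<not> principal_on P Q \<and> (\<forall>Q'\<subset>Q. principal_on P Q')"
  using assms
proof (induction U rule: finite_psubset_induct)
  case (psubset U)
  show ?case
  proof (cases "\<forall>Q'\<subset>U. principal_on P Q'")
    case False
    then obtain Q' where "Q' \<subset> U" "\<not> principal_on P Q'" by blast
    then obtain Q where Q: "Q \<subseteq> Q'" "\<not> principal_on P Q" "\<forall>Q''\<subset>Q. principal_on P Q''"
      using psubset.IH[of Q'] by blast
    have "Q \<subseteq> U" using Q(1) \<open>Q' \<subset> U\<close> by blast
    with Q(2,3) show ?thesis by blast
  qed (use psubset.prems in blast)
qed

lemma principal_on_if_card_le_1:
  assumes "finite Q" "card Q \<le> 1" "P {}"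
  shows "principal_on P Q"
proof -
  consider "Q = {}" | i where "Q = {i}"
    using assms(1,2) by (metis card_0_eq card_1_singletonE le_SucE le_zero_eq One_nat_def)
  then show ?thesis
  proof cases
    case 1
    then show ?thesis
      unfolding principal_on_def using assms(3) by auto
  next
    case (2 i)
    then show ?thesis
      unfolding principal_on_def using assms(3)
      by (intro exI[of _ "if P {i} then {i} else {}"]) (auto simp: subset_singleton_iff)
  qed
qed

lemma minimal_not_principal_almost_principal:
  assumes "finite Q" and empty: "P {}" and not_principal: "\<not> principal_on P Q"
    and minimal: "\<And>Q'. Q' \<subset> Q \<Longrightarrow> principal_on P Q'"
  shows "almost_principal_on P Q {i\<in>Q. P {i}} \<and> 2 \<le> card Q"
proof -
  let ?Z = "{i\<in>Q. P {i}}"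
  have proper: "P S \<longleftrightarrow> S \<subseteq> ?Z" if "S \<subset> Q" for S
  proof -
    obtain d where d: "d \<in> Q" "d \<notin> S" using \<open>S \<subset> Q\<close> by blast
    then obtain Z0 where Z0: "\<And>S'. S' \<subseteq> Q - {d} \<Longrightarrow> P S' \<longleftrightarrow> S' \<subseteq> Z0"
      using minimal[of "Q - {d}"] unfolding principal_on_def by blast
    have "i \<in> Z0 \<longleftrightarrow> i \<in> ?Z" if "i \<in> Q - {d}" for i
      using Z0[of "{i}"] that by auto
    moreover have "S \<subseteq> Q - {d}" using \<open>S \<subset> Q\<close> d by blast
    ultimately show ?thesis
      using Z0 by blast
  qed
  have full: "P Q \<longleftrightarrow> \<not> Q \<subseteq> ?Z"
  proof (rule ccontr)
    assume "\<not> (P Q \<longleftrightarrow> \<not> Q \<subseteq> ?Z)"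
    then have "P S \<longleftrightarrow> S \<subseteq> ?Z" if "S \<subseteq> Q" for S
      using proper that by (cases "S = Q") auto
    then have "principal_on P Q"
      unfolding principal_on_def by (intro exI[of _ ?Z]) auto
    then show False
      using not_principal by simp
  qed
  have "almost_principal_on P Q ?Z"
    unfolding almost_principal_on_def
  proof (intro conjI allI impI)
    fix S assume "S \<subseteq> Q"
    then show "P S \<longleftrightarrow> (S = Q) \<noteq> (S \<subseteq> ?Z)"
      using proper full by (cases "S = Q") auto
  qed blast
  moreover have "2 \<le> card Q"
    using principal_on_if_card_le_1[of Q P] \<open>finite Q\<close> empty not_principal by linarith
  ultimately show ?thesis by simp
qed

lemma not_principal_odd_subgees_above:
  assumes gen: "generic_length_vector n l" and G: "gee n l G" and "G \<noteq> {}"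
  shows "\<not> principal_on (\<lambda>S. odd (subgees_above n l S)) {1..n-1}"
proof
  assume "principal_on (\<lambda>S. odd (subgees_above n l S)) {1..n-1}"
  then obtain Z where "Z \<subseteq> {1..n-1}"
    and Z: "\<And>S. S \<subseteq> {1..n-1} \<Longrightarrow> odd (subgees_above n l S) \<longleftrightarrow> S \<subseteq> Z"
    unfolding principal_on_def by blast
  have G': "subgee n l G" "G \<subseteq> {1..n-1}"
    using G subgee_subset unfolding gee_def by blast+
  have "G \<subseteq> Z"
    using Z[OF G'(2)] subgees_above_gee[OF G] by simp
  moreover have "subgee n l Z"
    using Z[OF \<open>Z \<subseteq> {1..n-1}\<close>] subgee_if_odd_subgees_above[OF gen] by simp
  ultimately have "Z = G"
    using G unfolding gee_def by blast
  then have "{T. T \<subseteq> {1..n-1} - G \<and> card T \<le> n - 3 \<and> odd (subgees_above n l T)} = {{}}"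
    using Z by auto
  moreover have "card (U - G) \<le> n - 3" if "subgee n l U" for U
    using card_subgee_le[OF gen that] card_mono[OF finite_subgee[OF that], of "U - G"] by simp
  then have "even (card {T. T \<subseteq> {1..n-1} - G \<and> card T \<le> n - 3 \<and> odd (subgees_above n l T)})"
    using even_card_odd_subgees_above[OF gen G'(1)] \<open>G \<noteq> {}\<close> by blast
  ultimately show False by simp
qed

lemma card_le_if_almost_principal:
  assumes gen: "generic_length_vector n l"
    and Q: "almost_principal_on (\<lambda>S. odd (subgees_above n l S)) Q Z" and "2 \<le> card Q"
  shows "card Q \<le> n - 3"
proof (cases "Q \<subseteq> Z")
  case False
  then have "subgee n l Q"
    using Q subgee_if_odd_subgees_above[OF gen] unfolding almost_principal_on_def by blast
  then show ?thesis by (rule card_subgee_le[OF gen])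
next
  case True
  have "finite Q"
    using \<open>2 \<le> card Q\<close> card.infinite by fastforce
  then obtain a b where "a \<in> Q" "b \<in> Q" "a \<noteq> b"
    using \<open>2 \<le> card Q\<close> card_le_Suc0_iff_eq[of Q] by auto
  have "subgee n l (Q - {x})" if "x \<in> Q" for x
  proof -
    have "Q - {x} \<noteq> Q" "Q - {x} \<subseteq> Z"
      using that True by auto
    moreover have "Q - {x} \<subseteq> Q" by blast
    ultimately have "odd (subgees_above n l (Q - {x}))"
      using Q unfolding almost_principal_on_def by simp
    then show ?thesis
      by (rule subgee_if_odd_subgees_above[OF gen])
  qed
  then have "card ((Q - {a}) \<union> (Q - {b})) \<le> n - 3"
    using \<open>a \<in> Q\<close> \<open>b \<in> Q\<close> card_Un_subgees_le[OF gen] by blast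
  moreover have "(Q - {a}) \<union> (Q - {b}) = Q"
    using \<open>a \<noteq> b\<close> by blast
  ultimately show ?thesis by simp
qed

definition monomial_word :: "nat list \<Rightarrow> nat \<Rightarrow> nat \<Rightarrow> nat \<Rightarrow> nat option list" where
  "monomial_word xs b A k = map Some xs @ replicate A (Some b) @ replicate k None"

lemma length_monomial_word [simp]: "length (monomial_word xs b A k) = length xs + A + k"
  by (simp add: monomial_word_def)

lemma vidx_monomial_word:
  "vidx (monomial_word xs b A k) J = (\<lambda>j. xs ! j) ` (J \<inter> {..<length xs})
     \<union> (if J \<inter> {length xs..<length xs + A} = {} then {} else {b})"
proof -
  have nth: "monomial_word xs b A k ! j
      = (if j < length xs then Some (xs ! j) else if j < length xs + A then Some b else None)"
    if "j < length xs + A + k" for j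
    using that by (auto simp: monomial_word_def nth_append)
  show ?thesis
  proof (intro set_eqI iffI)
    fix i assume "i \<in> vidx (monomial_word xs b A k) J"
    then show "i \<in> (\<lambda>j. xs ! j) ` (J \<inter> {..<length xs})
        \<union> (if J \<inter> {length xs..<length xs + A} = {} then {} else {b})"
      unfolding vidx_def by (force simp: nth split: if_splits)
  next
    fix i assume "i \<in> (\<lambda>j. xs ! j) ` (J \<inter> {..<length xs})
        \<union> (if J \<inter> {length xs..<length xs + A} = {} then {} else {b})"
    then show "i \<in> vidx (monomial_word xs b A k) J"
      unfolding vidx_def by (force simp: nth split: if_splits)
  qed
qed

lemma image_nth_eq_set_iff:
  assumes "distinct xs"
  shows "(\<lambda>j. xs ! j) ` (J \<inter> {..<length xs}) = set xs \<longleftrightarrow> {..<length xs} \<subseteq> J"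
proof -
  have "set xs = (\<lambda>j. xs ! j) ` {..<length xs}"
    by (auto simp: in_set_conv_nth)
  moreover have "inj_on (\<lambda>j. xs ! j) {..<length xs}"
    using assms by (simp add: inj_on_nth)
  ultimately show ?thesis
    by (auto simp: inj_on_image_eq_iff)
qed

lemma vidx_monomial_word_eq_iff:
  assumes "distinct xs" "b \<notin> set xs"
  shows "vidx (monomial_word xs b A k) J = insert b (set xs)
     \<longleftrightarrow> {..<length xs} \<subseteq> J \<and> J \<inter> {length xs..<length xs + A} \<noteq> {}"
proof -
  have "(\<lambda>j. xs ! j) ` (J \<inter> {..<length xs}) \<subseteq> set xs"
    by auto
  then show ?thesis
    unfolding vidx_monomial_word using assms image_nth_eq_set_iff[OF assms(1), of J]
    by (auto simp: insert_eq_iff)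
qed

lemma vidx_monomial_word_subset: "vidx (monomial_word xs b A k) J \<subseteq> insert b (set xs)"
  unfolding vidx_monomial_word by auto

lemma mem_vidx_monomial_word:
  "b \<notin> set xs \<Longrightarrow> b \<in> vidx (monomial_word xs b A k) J \<longleftrightarrow> J \<inter> {length xs..<length xs + A} \<noteq> {}"
  unfolding vidx_monomial_word by auto

lemma almost_principal_vidx_monomial_word:
  assumes P: "almost_principal_on P (insert b (set xs)) Z" and "b \<notin> Z"
    and xs: "distinct xs" "b \<notin> set xs"
  shows "P (vidx (monomial_word xs b A k) J)
     \<longleftrightarrow> {..<length xs} \<subseteq> J \<and> J \<inter> {length xs..<length xs + A} \<noteq> {}
       \<or> vidx (monomial_word xs b A k) J \<subseteq> Z"
proof -
  have "P S \<longleftrightarrow> S = insert b (set xs) \<or> S \<subseteq> Z" if "S \<subseteq> insert b (set xs)" for S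
    using P that \<open>b \<notin> Z\<close> unfolding almost_principal_on_def by auto
  then show ?thesis
    using vidx_monomial_word_subset vidx_monomial_word_eq_iff[OF xs] by simp
qed

lemma monomial_word_outside_split_unique:
  assumes P: "almost_principal_on P (insert b (set xs)) Z" and "b \<notin> Z"
    and xs: "distinct xs" "b \<notin> set xs" and t: "0 < length xs" "length xs < m"
    and J: "J \<subseteq> {..<2 * m - 1}" "card J = m"
    and P1: "P (vidx (monomial_word xs b (m - length xs) (m - 1)) J)"
    and P2: "P (vidx (monomial_word xs b (m - length xs) (m - 1)) ({..<2 * m - 1} - J))"
  shows "J = {..<m}"
proof -
  let ?t = "length xs" and ?w = "monomial_word xs b (m - length xs) (m - 1)"
  let ?Jc = "{..<2 * m - 1} - J"
  have full: "{..<?t} \<subseteq> X" if "X \<inter> {?t..<m} \<noteq> {}" "P (vidx ?w X)" for X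
  proof -
    have "b \<in> vidx ?w X"
      using mem_vidx_monomial_word[OF xs(2)] that(1) t by simp
    then show ?thesis
      using almost_principal_vidx_monomial_word[OF P \<open>b \<notin> Z\<close> xs] that(2) \<open>b \<notin> Z\<close> t by auto
  qed
  have "0 \<in> {..<?t}" "?t \<in> {?t..<m}" "{?t..<m} \<subseteq> {..<2 * m - 1}"
    using t by auto
  show ?thesis
  proof (cases "J \<inter> {?t..<m} = {}")
    case False
    then have "{..<?t} \<subseteq> J"
      using full P1 by blast
    then have "?Jc \<inter> {?t..<m} = {}"
      using full[of ?Jc] P2 \<open>0 \<in> {..<?t}\<close> by blast
    then have "{..<?t} \<union> {?t..<m} \<subseteq> J"
      using \<open>{..<?t} \<subseteq> J\<close> \<open>{?t..<m} \<subseteq> {..<2 * m - 1}\<close> by blast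
    then have "{..<m} \<subseteq> J"
      using t by (simp add: ivl_disj_un_one(2))
    moreover have "card {..<m} = card J"
      using J(2) by simp
    ultimately show ?thesis
      using card_subset_eq[OF finite_subset[OF J(1)]] by blast
  next
    case True
    then have "{..<?t} \<subseteq> ?Jc"
      using full[of ?Jc] P2 \<open>?t \<in> {?t..<m}\<close> \<open>{?t..<m} \<subseteq> {..<2 * m - 1}\<close> by blast
    with True J(1) have "J \<subseteq> {..<2 * m - 1} - ({..<?t} \<union> {?t..<m})"
      by blast
    then have "card J \<le> m - 1"
      using card_mono[of "{..<2 * m - 1} - {..<m}" J] t by (simp add: ivl_disj_un_one(2))
    then show ?thesis
      using J(2) t by simp
  qed
qed

lemma split_count_monomial_word_outside:
  assumes P: "almost_principal_on P (insert b (set xs)) Z" and "b \<notin> Z"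
    and xs: "distinct xs" "b \<notin> set xs" and t: "0 < length xs" "length xs < m"
  shows "split_count P (monomial_word xs b (m - length xs) (m - 1)) m = 1"
proof -
  let ?w = "monomial_word xs b (m - length xs) (m - 1)"
  have "vidx ?w ({..<2 * m - 1} - {..<m}) = {}"
    unfolding vidx_monomial_word using t by auto
  moreover have "P {}"
    using P unfolding almost_principal_on_def by auto
  moreover have "P (vidx ?w {..<m})"
    using almost_principal_vidx_monomial_word[OF P \<open>b \<notin> Z\<close> xs] t by auto
  ultimately have "P (vidx ?w {..<m}) \<and> P (vidx ?w ({..<2 * m - 1} - {..<m}))"
    by simp
  then have "{J. J \<subseteq> {..<2 * m - 1} \<and> card J = m \<and> P (vidx ?w J) \<and> P (vidx ?w ({..<2 * m - 1} - J))}
      = {{..<m}}"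
    using monomial_word_outside_split_unique[OF P \<open>b \<notin> Z\<close> xs t] by auto
  moreover have len: "length ?w = 2 * m - 1"
    using t by simp
  ultimately show ?thesis
    unfolding split_count_def len by simp
qed

lemma card_filter_conj_split:
  "finite A \<Longrightarrow> card {x\<in>A. P x} = card {x\<in>A. P x \<and> Q x} + card {x\<in>A. P x \<and> \<not> Q x}"
  by (subst card_Un_disjoint[symmetric]) (auto intro: arg_cong[where f = card])

lemma subset_Diff_iff_disjoint: "A \<subseteq> U \<Longrightarrow> A \<subseteq> U - J \<longleftrightarrow> J \<inter> A = {}"
  by blast

lemma Diff_Int_eq_empty_iff: "A \<subseteq> U \<Longrightarrow> (U - J) \<inter> A = {} \<longleftrightarrow> A \<subseteq> J"
  by blast

lemma card_subsets_containing:
  assumes "finite V" "T \<subseteq> V"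
  shows "card {J. J \<subseteq> V \<and> T \<subseteq> J \<and> card J = k}
       = (if card T \<le> k then (card V - card T) choose (k - card T) else 0)"
proof (cases "card T \<le> k")
  case True
  have fin: "finite T" using assms finite_subset by blast
  have "{J. J \<subseteq> V \<and> T \<subseteq> J \<and> card J = k} = (\<lambda>K. K \<union> T) ` {K. K \<subseteq> V - T \<and> card K = k - card T}"
  proof (intro set_eqI iffI)
    fix J assume J: "J \<in> {J. J \<subseteq> V \<and> T \<subseteq> J \<and> card J = k}"
    then have "J = (J - T) \<union> T" "card (J - T) = k - card T"
      using fin by (auto simp: card_Diff_subset)
    then show "J \<in> (\<lambda>K. K \<union> T) ` {K. K \<subseteq> V - T \<and> card K = k - card T}"
      using J by blast
  next
    fix J assume "J \<in> (\<lambda>K. K \<union> T) ` {K. K \<subseteq> V - T \<and> card K = k - card T}"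
    then obtain K where K: "J = K \<union> T" "K \<subseteq> V - T" "card K = k - card T" by blast
    moreover have "finite K" "K \<inter> T = {}"
      using K(2) assms(1) finite_subset by auto
    ultimately have "card J = k"
      using fin True by (simp add: card_Un_disjoint)
    then show "J \<in> {J. J \<subseteq> V \<and> T \<subseteq> J \<and> card J = k}"
      using K assms(2) by auto
  qed
  moreover have "inj_on (\<lambda>K. K \<union> T) {K. K \<subseteq> V - T \<and> card K = k - card T}"
    by (rule inj_onI) blast
  ultimately show ?thesis
    using assms True by (simp add: card_image n_subsets card_Diff_subset fin)
next
  case False
  then have "{J. J \<subseteq> V \<and> T \<subseteq> J \<and> card J = k} = {}"
    using assms(1) by (auto dest: card_mono[OF finite_subset])
  then have "card {J. J \<subseteq> V \<and> T \<subseteq> J \<and> card J = k} = 0"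
    by (simp only: card.empty)
  then show ?thesis using False by simp
qed

lemma card_subsets_containing_avoiding:
  assumes "finite V" "T \<subseteq> V" "B \<subseteq> V" "T \<inter> B = {}"
  shows "card {J. (J \<subseteq> V \<and> card J = k) \<and> T \<subseteq> J \<and> J \<inter> B = {}}
       = (if card T \<le> k then (card V - card B - card T) choose (k - card T) else 0)"
proof -
  have "card {J. (J \<subseteq> V \<and> card J = k) \<and> T \<subseteq> J \<and> J \<inter> B = {}}
      = card {J. J \<subseteq> V - B \<and> T \<subseteq> J \<and> card J = k}"
    by (rule arg_cong[where f = card]) blast
  also have "\<dots> = (if card T \<le> k then (card (V - B) - card T) choose (k - card T) else 0)"
    using assms by (intro card_subsets_containing) auto
  finally show ?thesis
    using assms by (simp add: card_Diff_subset finite_subset)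
qed

lemma card_filter_two_exclusions:
  assumes "finite \<J>" "T \<noteq> {}"
  shows "card {J\<in>\<J>. \<not> (T \<subseteq> J \<and> J \<inter> B \<noteq> {}) \<and> \<not> (J \<inter> T = {} \<and> \<not> B \<subseteq> J)}
       + card {J\<in>\<J>. T \<subseteq> J} + card {J\<in>\<J>. J \<inter> T = {}}
     = card \<J> + card {J\<in>\<J>. T \<subseteq> J \<and> J \<inter> B = {}} + card {J\<in>\<J>. J \<inter> T = {} \<and> B \<subseteq> J}"
proof -
  have "card \<J> = card {J\<in>\<J>. T \<subseteq> J \<and> J \<inter> B \<noteq> {}} + card {J\<in>\<J>. \<not> (T \<subseteq> J \<and> J \<inter> B \<noteq> {})}"
    using card_filter_conj_split[OF assms(1), of "\<lambda>_. True" "\<lambda>J. T \<subseteq> J \<and> J \<inter> B \<noteq> {}"] by simp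
  moreover have "card {J\<in>\<J>. \<not> (T \<subseteq> J \<and> J \<inter> B \<noteq> {})}
      = card {J\<in>\<J>. J \<inter> T = {} \<and> \<not> B \<subseteq> J}
        + card {J\<in>\<J>. \<not> (T \<subseteq> J \<and> J \<inter> B \<noteq> {}) \<and> \<not> (J \<inter> T = {} \<and> \<not> B \<subseteq> J)}"
  proof -
    have "{J\<in>\<J>. \<not> (T \<subseteq> J \<and> J \<inter> B \<noteq> {}) \<and> (J \<inter> T = {} \<and> \<not> B \<subseteq> J)}
        = {J\<in>\<J>. J \<inter> T = {} \<and> \<not> B \<subseteq> J}"
      using assms(2) by blast
    then show ?thesis
      using card_filter_conj_split[OF assms(1), of "\<lambda>J. \<not> (T \<subseteq> J \<and> J \<inter> B \<noteq> {})"
          "\<lambda>J. J \<inter> T = {} \<and> \<not> B \<subseteq> J"] by simp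
  qed
  moreover have "card {J\<in>\<J>. T \<subseteq> J}
      = card {J\<in>\<J>. T \<subseteq> J \<and> J \<inter> B \<noteq> {}} + card {J\<in>\<J>. T \<subseteq> J \<and> J \<inter> B = {}}"
    using card_filter_conj_split[OF assms(1), of "\<lambda>J. T \<subseteq> J" "\<lambda>J. J \<inter> B \<noteq> {}"] by simp
  moreover have "card {J\<in>\<J>. J \<inter> T = {}}
      = card {J\<in>\<J>. J \<inter> T = {} \<and> \<not> B \<subseteq> J} + card {J\<in>\<J>. J \<inter> T = {} \<and> B \<subseteq> J}"
    using card_filter_conj_split[OF assms(1), of "\<lambda>J. J \<inter> T = {}" "\<lambda>J. \<not> B \<subseteq> J"] by simp
  ultimately show ?thesis by linarith
qed

lemma split_count_monomial_word_inside_eq: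
  assumes P: "\<And>S. S \<subseteq> insert b (set xs) \<Longrightarrow> P S \<longleftrightarrow> S \<noteq> insert b (set xs)"
    and xs: "distinct xs" "b \<notin> set xs" and "length xs + A \<le> L"
  shows "split_count P (monomial_word xs b A (L - A - length xs)) m
       = card {J. (J \<subseteq> {..<L} \<and> card J = m)
           \<and> \<not> ({..<length xs} \<subseteq> J \<and> J \<inter> {length xs..<length xs + A} \<noteq> {})
           \<and> \<not> (J \<inter> {..<length xs} = {} \<and> \<not> {length xs..<length xs + A} \<subseteq> J)}"
proof -
  let ?t = "length xs" and ?w = "monomial_word xs b A (L - A - length xs)"
  have "P (vidx ?w J) \<longleftrightarrow> \<not> ({..<?t} \<subseteq> J \<and> J \<inter> {?t..<?t + A} \<noteq> {})" for J
    using P[OF vidx_monomial_word_subset] vidx_monomial_word_eq_iff[OF xs] by simp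
  moreover have "{..<?t} \<subseteq> {..<L} - J \<longleftrightarrow> J \<inter> {..<?t} = {}" for J
    by (rule subset_Diff_iff_disjoint) (use assms(4) in auto)
  moreover have "({..<L} - J) \<inter> {?t..<?t + A} = {} \<longleftrightarrow> {?t..<?t + A} \<subseteq> J" for J
    by (rule Diff_Int_eq_empty_iff) (use assms(4) in auto)
  moreover have "length ?w = L"
    using assms(4) by simp
  ultimately show ?thesis
    unfolding split_count_def by (auto intro!: arg_cong[where f = card])
qed

lemma split_count_monomial_word_inside_binomial:
  assumes P: "\<And>S. S \<subseteq> insert b (set xs) \<Longrightarrow> P S \<longleftrightarrow> S \<noteq> insert b (set xs)"
    and xs: "distinct xs" "b \<notin> set xs" and t: "0 < length xs" "length xs \<le> m"
    and "length xs + A \<le> L"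
  shows "split_count P (monomial_word xs b A (L - A - length xs)) m
         + ((L - length xs) choose (m - length xs)) + ((L - length xs) choose m)
       = (L choose m) + ((L - A - length xs) choose (m - length xs))
         + (if A \<le> m then (L - A - length xs) choose (m - A) else 0)"
proof -
  let ?t = "length xs" and ?T = "{..<length xs}" and ?B = "{length xs..<length xs + A}"
  let ?\<J> = "{J. J \<subseteq> {..<L} \<and> card J = m}"
  have "finite ?\<J>"
    by (rule finite_subset[of _ "Pow {..<L}"]) auto
  have sub: "?T \<subseteq> {..<L}" "?B \<subseteq> {..<L}" "?T \<inter> ?B = {}" "?T \<noteq> {}"
    using assms(6) t(1) by (auto simp: lessThan_empty_iff)
  have "card ?\<J> = L choose m"
    by (simp add: n_subsets)
  moreover have "card {J\<in>?\<J>. ?T \<subseteq> J} = (L - ?t) choose (m - ?t)"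
    using card_subsets_containing_avoiding[of "{..<L}" ?T "{}" m] sub t by simp
  moreover have "card {J\<in>?\<J>. J \<inter> ?T = {}} = (L - ?t) choose m"
    using card_subsets_containing_avoiding[of "{..<L}" "{}" ?T m] sub by simp
  moreover have "card {J\<in>?\<J>. ?T \<subseteq> J \<and> J \<inter> ?B = {}} = (L - A - ?t) choose (m - ?t)"
    using card_subsets_containing_avoiding[of "{..<L}" ?T ?B m] sub t by simp
  moreover have "card {J\<in>?\<J>. J \<inter> ?T = {} \<and> ?B \<subseteq> J}
      = (if A \<le> m then (L - A - ?t) choose (m - A) else 0)"
    using card_subsets_containing_avoiding[of "{..<L}" ?B ?T m] sub
    by (simp add: Int_commute conj_commute add.commute)
  ultimately show ?thesis
    using split_count_monomial_word_inside_eq[OF P xs assms(6), of m]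
      card_filter_two_exclusions[OF \<open>finite ?\<J>\<close> \<open>?T \<noteq> {}\<close>, of ?B] by simp
qed

text \<open>By the binomial formula, the split counts for A = m and for A = m + 1 (or A = m - 1
  when t = m - 1) differ by one, so one of them is odd.\<close>
lemma split_count_monomial_word_inside:
  assumes P: "\<And>S. S \<subseteq> insert b (set xs) \<Longrightarrow> P S \<longleftrightarrow> S \<noteq> insert b (set xs)"
    and xs: "distinct xs" "b \<notin> set xs" and t: "0 < length xs" "length xs < m"
  shows "\<exists>A. 0 < A \<and> A + length xs + 1 \<le> 2 * m
           \<and> odd (split_count P (monomial_word xs b A (2 * m - A - length xs - 1)) m)"
proof -
  let ?t = "length xs"
  define E where "E A = split_count P (monomial_word xs b A (2 * m - A - ?t - 1)) m" for A
  have E: "E A + ((2 * m - 1 - ?t) choose (m - ?t)) + ((2 * m - 1 - ?t) choose m)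
      = ((2 * m - 1) choose m) + ((2 * m - 1 - A - ?t) choose (m - ?t))
        + (if A \<le> m then (2 * m - 1 - A - ?t) choose (m - A) else 0)"
    if "?t + A \<le> 2 * m - 1" for A
    using split_count_monomial_word_inside_binomial[OF P xs, of m A "2 * m - 1"] t that
    unfolding E_def by (simp add: diff_diff_add ac_simps)
  have E_m: "E m + ((2 * m - 1 - ?t) choose (m - ?t)) + ((2 * m - 1 - ?t) choose m)
      = ((2 * m - 1) choose m) + 1"
    using E[of m] t by simp
  consider (short) "?t + 1 < m" | (long) "?t + 1 = m" "2 \<le> m"
    using t by linarith
  then obtain A where A: "0 < A" "A + ?t + 1 \<le> 2 * m" and "E A = E m + 1 \<or> E m = E A + 1"
  proof cases
    case short
    then have "E (m + 1) + ((2 * m - 1 - ?t) choose (m - ?t)) + ((2 * m - 1 - ?t) choose m)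
        = ((2 * m - 1) choose m)"
      using E[of "m + 1"] by simp
    then show ?thesis
      using that[of "m + 1"] E_m short by simp
  next
    case long
    then have "E (m - 1) + ((2 * m - 1 - ?t) choose (m - ?t)) + ((2 * m - 1 - ?t) choose m)
        = ((2 * m - 1) choose m) + 2"
      using E[of "m - 1"] by (simp add: numeral_2_eq_2)
    then show ?thesis
      using that[of "m - 1"] E_m long by simp
  qed
  then have "\<exists>A. 0 < A \<and> A + ?t + 1 \<le> 2 * m \<and> odd (E A)"
    using t by (cases "odd (E m)") (auto intro: exI[of _ m] exI[of _ A])
  then show ?thesis
    unfolding E_def .
qed

section \<open>The case of a nonempty gee\<close>

lemma exists_odd_split_count:
  assumes P: "almost_principal_on P Q Z" and "finite Q" "2 \<le> card Q" "card Q \<le> m"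
  shows "\<exists>xs b A. distinct (xs @ [b]) \<and> set (xs @ [b]) = Q \<and> 0 < length xs
           \<and> 0 < A \<and> A + length xs + 1 \<le> 2 * m
           \<and> odd (split_count P (monomial_word xs b A (2 * m - A - length xs - 1)) m)"
proof -
  have word: "\<exists>xs. distinct xs \<and> b \<notin> set xs \<and> insert b (set xs) = Q \<and> 0 < length xs \<and> length xs < m"
    if "b \<in> Q" for b
  proof (intro exI conjI)
    let ?xs = "sorted_list_of_set (Q - {b})"
    have "length ?xs = card Q - 1"
      using \<open>finite Q\<close> that by simp
    then show "0 < length ?xs" "length ?xs < m"
      using assms(3,4) by simp_all
  qed (use \<open>finite Q\<close> that in auto)
  show ?thesis
  proof (cases "Q \<subseteq> Z")
    case False
    then obtain b where "b \<in> Q" "b \<notin> Z" by blast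
    then obtain xs where xs: "distinct xs" "b \<notin> set xs" "insert b (set xs) = Q"
      "0 < length xs" "length xs < m"
      using word by blast
    then have "split_count P (monomial_word xs b (m - length xs) (m - 1)) m = 1"
      using split_count_monomial_word_outside[of P b xs Z m] P \<open>b \<notin> Z\<close> by simp
    moreover have "2 * m - (m - length xs) - length xs - 1 = m - 1"
      using xs by simp
    ultimately show ?thesis
      using xs by (intro exI[of _ xs] exI[of _ b] exI[of _ "m - length xs"]) auto
  next
    case True
    obtain b where "b \<in> Q"
      using \<open>2 \<le> card Q\<close> by fastforce
    then obtain xs where xs: "distinct xs" "b \<notin> set xs" "insert b (set xs) = Q"
      "0 < length xs" "length xs < m"
      using word by blast
    have "P S \<longleftrightarrow> S \<noteq> insert b (set xs)" if "S \<subseteq> insert b (set xs)" for S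
      using P True that xs(3) unfolding almost_principal_on_def by auto
    then show ?thesis
      using split_count_monomial_word_inside[of b xs P m] xs by auto
  qed
qed

lemma not_tensor_zero_barprod_mixed:
  assumes gen: "generic_length_vector n l" and Rm: "\<not> HK_zero n l {(n - 3, {})}"
    and G: "gee n l G" "G \<noteq> {}"
  shows "\<exists>t A is. 0 < t \<and> 0 < A \<and> A + t + 1 \<le> 2 * (n - 3) \<and>
           length is = t + 1 \<and> distinct is \<and> set is \<subseteq> {1..n-1} \<and>
           \<not> tensor_zero n l (barprod (map Some (take t is) @ replicate A (Some (is ! t))
                                      @ replicate (2 * (n - 3) - A - t - 1) None))"
proof -
  let ?P = "\<lambda>S. odd (subgees_above n l S)"
  obtain Q where "Q \<subseteq> {1..n-1}" "\<not> principal_on ?P Q" "\<forall>Q'\<subset>Q. principal_on ?P Q'"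
    using exists_minimal_not_principal[OF _ not_principal_odd_subgees_above[OF gen G]] by auto
  moreover have "?P {}"
    using odd_card_subgees[OF gen Rm] unfolding subgees_above_def by simp
  moreover have "finite Q"
    using \<open>Q \<subseteq> {1..n-1}\<close> finite_subset by blast
  ultimately have Q: "almost_principal_on ?P Q {i\<in>Q. ?P {i}}" "2 \<le> card Q"
    using minimal_not_principal_almost_principal[of Q ?P] by simp_all
  then have "card Q \<le> n - 3"
    by (rule card_le_if_almost_principal[OF gen])
  then obtain xs b A where xs: "distinct (xs @ [b])" "set (xs @ [b]) = Q" "0 < length xs"
      "0 < A" "A + length xs + 1 \<le> 2 * (n - 3)"
    and odd: "odd (split_count ?P (monomial_word xs b A (2 * (n - 3) - A - length xs - 1)) (n - 3))"
    using exists_odd_split_count[OF Q(1) \<open>finite Q\<close> Q(2)] by blast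
  have "\<not> tensor_zero n l (barprod (monomial_word xs b A (2 * (n - 3) - A - length xs - 1)))"
    using xs by (intro not_tensor_zero_barprod_if_odd_split_count[OF gen _ odd]) simp
  then show ?thesis
    using xs \<open>Q \<subseteq> {1..n-1}\<close>
    by (intro exI[of _ "length xs"] exI[of _ A] exI[of _ "xs @ [b]"]) (simp add: monomial_word_def)
qed

theorem theorem1p5:
  fixes n :: nat and l :: "nat \<Rightarrow> real"
  assumes gen: "generic_length_vector n l"
    and n4: "4 \<le> n"
    and Rm: "\<not> HK_zero n l {(n - 3, {})}"
  shows "((\<exists>k::nat. n - 3 = 2 ^ k) \<longrightarrow>
            \<not> tensor_zero n l (barprod (replicate (2 * (n - 3) - 1) None)))
       \<and> ((\<not> (\<exists>k::nat. n - 3 = 2 ^ k)) \<and> (\<exists>G. gee n l G \<and> G \<noteq> {}) \<longrightarrow>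
            (\<exists>(t::nat) (A::nat) (is :: nat list).
               0 < t \<and> 0 < A \<and> A + t + 1 \<le> 2 * (n - 3) \<and>
               length is = t + 1 \<and> distinct is \<and> set is \<subseteq> {1..n-1} \<and>
               \<not> tensor_zero n l
                  (barprod (map Some (take t is) @ replicate A (Some (is ! t))
                            @ replicate (2 * (n - 3) - A - t - 1) None))))"
proof (intro conjI impI)
  assume "\<exists>k. n - 3 = 2 ^ k"
  then obtain k where "n - 3 = 2 ^ k" ..
  then show "\<not> tensor_zero n l (barprod (replicate (2 * (n - 3) - 1) None))"
    by (rule not_tensor_zero_barprod_R[OF gen Rm])
next
  assume "\<not> (\<exists>k. n - 3 = 2 ^ k) \<and> (\<exists>G. gee n l G \<and> G \<noteq> {})"
  then obtain G where "gee n l G" "G \<noteq> {}" by blast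
  then show "\<exists>t A is. 0 < t \<and> 0 < A \<and> A + t + 1 \<le> 2 * (n - 3) \<and>
               length is = t + 1 \<and> distinct is \<and> set is \<subseteq> {1..n-1} \<and>
               \<not> tensor_zero n l
                  (barprod (map Some (take t is) @ replicate A (Some (is ! t))
                            @ replicate (2 * (n - 3) - A - t - 1) None))"
    by (rule not_tensor_zero_barprod_mixed[OF gen Rm])
qed

end
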